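(* Let $H$ be a complex Hilbert space and let $A$ and $B$ be self-adjoint operators in $H$, at least one of which is positive, such that $D(A^2)=D(B^2)$. Let $T=A+iB$ (defined on $D(A)\cap D(B)$). If $T^2\subset 0$, then $T=0$ everywhere on $H$.
   Context: Products are taken on natural domains $D(ST)=\{x\in D(T):Tx\in D(S)\}$ and sums on $D(S+T)=D(S)\cap D(T)$. $T^2\subset 0$ means $T^2x=0$ for all $x\in D(T^2)$. A self-adjoint $A$ is positive if $\langle Ax,x\rangle\geq 0$ for all $x\in D(A)$. "$T=0$ everywhere on $H$" means $D(T)=H$ and $Tx=0$ for all $x\in H$. *)

theory Defs
  imports "HOL-Analysis.Analysis"
begin

class complex_inner = real_normed_vector +
  fixes scaleC :: "complex \<Rightarrow> 'a \<Rightarrow> 'a"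
    and cinner :: "'a \<Rightarrow> 'a \<Rightarrow> complex"
  assumes scaleC_of_real: "scaleC (of_real r) x = scaleR r x"
    and scaleC_add_right: "scaleC a (x + y) = scaleC a x + scaleC a y"
    and scaleC_add_left: "scaleC (a + b) x = scaleC a x + scaleC b x"
    and scaleC_scaleC: "scaleC a (scaleC b x) = scaleC (a * b) x"
    and cinner_add_left: "cinner (x + y) z = cinner x z + cinner y z"
    and cinner_scaleC_left: "cinner (scaleC a x) y = cnj a * cinner x y"
    and cinner_commute: "cinner x y = cnj (cinner y x)"
    and cinner_ge_zero: "0 \<le> Re (cinner x x)"
    and cinner_eq_zero_iff: "cinner x x = 0 \<longleftrightarrow> x = 0"
    and norm_eq_sqrt_cinner: "norm x = sqrt (Re (cinner x x))"

class chilbert_space = complex_inner + complete_space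

type_synonym 'a op = "'a \<Rightarrow> 'a option"

text \<open>Product on the natural domain D(ST) = {x in D(T). Tx in D(S)}: this is map composition.\<close>
definition op_mult :: "'a op \<Rightarrow> 'a op \<Rightarrow> 'a op" where
  "op_mult S T = S \<circ>\<^sub>m T"

definition op_plus :: "('a::plus) op \<Rightarrow> 'a op \<Rightarrow> 'a op" where
  "op_plus S T = (\<lambda>x. case (S x, T x) of (Some a, Some b) \<Rightarrow> Some (a + b) | _ \<Rightarrow> None)"

definition op_scale :: "complex \<Rightarrow> ('a::complex_inner) op \<Rightarrow> 'a op" where
  "op_scale c T = (\<lambda>x. map_option (scaleC c) (T x))"

definition op_adjoint :: "('a::complex_inner) op \<Rightarrow> 'a op" where
  "op_adjoint T = (\<lambda>y. if \<exists>z. \<forall>x\<in>dom T. cinner (the (T x)) y = cinner x z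
                        then Some (THE z. \<forall>x\<in>dom T. cinner (the (T x)) y = cinner x z)
                        else None)"

definition densely_defined :: "('a::complex_inner) op \<Rightarrow> bool" where
  "densely_defined T \<longleftrightarrow> closure (dom T) = UNIV"

definition self_adjoint :: "('a::complex_inner) op \<Rightarrow> bool" where
  "self_adjoint T \<longleftrightarrow> densely_defined T \<and> op_adjoint T = T"

definition positive_op :: "('a::complex_inner) op \<Rightarrow> bool" where
  "positive_op A \<longleftrightarrow> self_adjoint A \<and> (\<forall>x\<in>dom A. 0 \<le> Re (cinner (the (A x)) x))"

end

theory Submission
  imports Defs
begin

(* Since D(A^2) = D(B^2), the closed graph theorem bounds (A^2 + 1)^-1 (B^2 + 1), and a
   log-convexity argument of Heinz type turns this into ||Bx||^2 + ||x||^2 <= C (||Ax||^2 + ||x||^2)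
   on D(A^2). As D(A^2) is a core for A and B is closed, D(A) is contained in D(B), and by symmetry
   D(A) = D(B); hence every x in D(A^2) lies in D(T^2).
   For such x put y = Tx. Then Ay + iBy = T^2 x = 0, and as <Ay,y> and <By,y> are real, both vanish;
   the positive one of A, B therefore kills y, and then so does the other. Now
   ||y||^2 = <x,Ay> - i <x,By> = 0, and the same argument applied to x gives Ax = Bx = 0.
   Finally, a self-adjoint operator vanishing on D(A^2) vanishes everywhere: for w in D(A),
   u = (A^2 + 1)^-1 Aw satisfies ||Au||^2 + ||u||^2 = <w,Au> = 0. *)

section \<open>Complex inner product spaces\<close>

lemma scaleC_zero_left [simp]: "scaleC 0 (x::'a::complex_inner) = 0"
  using scaleC_of_real[of 0 x] by simp

lemma scaleC_one [simp]: "scaleC 1 (x::'a::complex_inner) = x"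
  using scaleC_of_real[of 1 x] by simp

lemma scaleC_zero_right [simp]: "scaleC a (0::'a::complex_inner) = 0"
  using scaleC_add_right[of a 0 0] by simp

lemma scaleC_minus_left: "scaleC (- a) (x::'a::complex_inner) = - scaleC a x"
  using scaleC_add_left[of "-a" a x] by (simp add: eq_neg_iff_add_eq_0)

lemma scaleC_minus_right: "scaleC a (- x::'a::complex_inner) = - scaleC a x"
  using scaleC_add_right[of a "-x" x] by (simp add: eq_neg_iff_add_eq_0)

lemma scaleC_diff_right: "scaleC a (x - y::'a::complex_inner) = scaleC a x - scaleC a y"
  using scaleC_add_right[of a x "-y"] by (simp add: scaleC_minus_right)

lemma scaleC_eq_0_iff: "scaleC a (x::'a::complex_inner) = 0 \<longleftrightarrow> a = 0 \<or> x = 0"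
proof
  assume "scaleC a x = 0"
  moreover have "scaleC (inverse a) (scaleC a x) = x" if "a \<noteq> 0"
    using that by (simp add: scaleC_scaleC)
  ultimately show "a = 0 \<or> x = 0" by auto
qed auto

lemma cinner_zero_left [simp]: "cinner 0 (y::'a::complex_inner) = 0"
  using cinner_add_left[of 0 0 y] by simp

lemma cinner_add_right: "cinner (x::'a::complex_inner) (y + z) = cinner x y + cinner x z"
  by (metis cinner_commute cinner_add_left complex_cnj_add)

lemma cinner_scaleC_right: "cinner (x::'a::complex_inner) (scaleC a y) = a * cinner x y"
  by (metis cinner_commute cinner_scaleC_left complex_cnj_cnj complex_cnj_mult)

lemma cinner_zero_right [simp]: "cinner (x::'a::complex_inner) 0 = 0"
  using cinner_add_right[of x 0 0] by simp

lemma cinner_minus_left: "cinner (- x::'a::complex_inner) y = - cinner x y"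
  using cinner_add_left[of x "-x" y] by (simp add: eq_neg_iff_add_eq_0 add.commute)

lemma cinner_minus_right: "cinner (x::'a::complex_inner) (- y) = - cinner x y"
  using cinner_add_right[of x y "-y"] by (simp add: eq_neg_iff_add_eq_0 add.commute)

lemma cinner_diff_right: "cinner (x::'a::complex_inner) (y - z) = cinner x y - cinner x z"
  using cinner_add_right[of x y "-z"] by (simp add: cinner_minus_right)

lemma Re_cinner_commute: "Re (cinner y x) = Re (cinner (x::'a::complex_inner) y)"
  by (subst cinner_commute) simp

lemma cinner_self_eq_norm_sq: "cinner (x::'a::complex_inner) x = of_real ((norm x)\<^sup>2)"
  using cinner_commute[of x x] norm_eq_sqrt_cinner[of x] cinner_ge_zero[of x]
  by (simp add: complex_eq_iff)

lemma norm_sq_eq_Re_cinner: "(norm (x::'a::complex_inner))\<^sup>2 = Re (cinner x x)"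
  by (simp add: cinner_self_eq_norm_sq)

lemma norm_scaleC: "norm (scaleC s (x::'a::complex_inner)) = cmod s * norm x"
proof -
  have "of_real ((norm (scaleC s x))\<^sup>2) = cnj s * s * of_real ((norm x)\<^sup>2)"
    using cinner_self_eq_norm_sq[of "scaleC s x"] cinner_self_eq_norm_sq[of x]
    by (simp add: cinner_scaleC_left cinner_scaleC_right mult.assoc mult.left_commute del: of_real_power)
  also have "cnj s * s = of_real ((cmod s)\<^sup>2)" using complex_norm_square[of s] by (simp add: mult.commute)
  finally have "of_real ((norm (scaleC s x))\<^sup>2) = (of_real ((cmod s * norm x)\<^sup>2) :: complex)"
    by (simp add: power_mult_distrib del: of_real_power)
  then have "(norm (scaleC s x))\<^sup>2 = (cmod s * norm x)\<^sup>2" using of_real_eq_iff by blast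
  then show ?thesis by (rule power2_eq_imp_eq) auto
qed

lemma norm_add_sq:
  "(norm (x + y :: 'a::complex_inner))\<^sup>2 = (norm x)\<^sup>2 + (norm y)\<^sup>2 + 2 * Re (cinner x y)"
  using Re_cinner_commute[of x y]
  by (simp add: norm_sq_eq_Re_cinner cinner_add_left cinner_add_right)

lemma norm_diff_sq:
  "(norm (x - y :: 'a::complex_inner))\<^sup>2 = (norm x)\<^sup>2 + (norm y)\<^sup>2 - 2 * Re (cinner x y)"
  using norm_add_sq[of x "-y"] by (simp add: cinner_minus_right)

lemma parallelogram_law:
  "(norm (x + y :: 'a::complex_inner))\<^sup>2 + (norm (x - y))\<^sup>2 = 2 * (norm x)\<^sup>2 + 2 * (norm y)\<^sup>2"
  by (simp add: norm_add_sq norm_diff_sq)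

lemma quadratic_nonneg_imp_cmod_sq_le:
  fixes a b :: real and c :: complex
  assumes nonneg: "\<And>s::complex. 0 \<le> a + 2 * Re (s * c) + (cmod s)\<^sup>2 * b" and "0 \<le> b"
  shows "(cmod c)\<^sup>2 \<le> a * b"
proof (cases "b = 0")
  case True
  have "c = 0"
  proof (rule ccontr)
    assume "c \<noteq> 0"
    define t where "t = (\<bar>a\<bar> + 1) / (cmod c)\<^sup>2"
    have "Re (of_real (-t) * cnj c * c) = - t * (cmod c)\<^sup>2"
      by (simp add: complex_mult_cnj cmod_def power2_eq_square mult.assoc)
    moreover have "t * (cmod c)\<^sup>2 = \<bar>a\<bar> + 1" using \<open>c \<noteq> 0\<close> by (simp add: t_def)
    moreover have "0 \<le> a + 2 * Re (of_real (-t) * cnj c * c)"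
      using nonneg[of "of_real (-t) * cnj c"] True by simp
    ultimately show False by linarith
  qed
  then show ?thesis using True by simp
next
  case False
  then have "b > 0" using assms(2) by simp
  define s where "s = - cnj c / of_real b"
  have "Re (s * c) = - (cmod c)\<^sup>2 / b"
    unfolding s_def using \<open>b > 0\<close>
    by (simp add: complex_mult_cnj cmod_def power2_eq_square Re_divide_of_real mult.commute)
      (simp add: field_simps)
  moreover have "(cmod s)\<^sup>2 = (cmod c)\<^sup>2 / b\<^sup>2"
    unfolding s_def using \<open>b > 0\<close> by (simp add: norm_divide power_divide)
  moreover have "0 \<le> a + 2 * Re (s * c) + (cmod s)\<^sup>2 * b" by (rule nonneg)
  moreover have "(cmod c)\<^sup>2 / b\<^sup>2 * b = (cmod c)\<^sup>2 / b"
    using \<open>b > 0\<close> by (simp add: power2_eq_square)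
  ultimately have "(cmod c)\<^sup>2 / b \<le> a" by simp
  then show ?thesis using \<open>b > 0\<close> by (simp add: pos_divide_le_eq)
qed

lemma hermitian_form_Cauchy_Schwarz:
  fixes q :: "'a::complex_inner \<Rightarrow> 'a \<Rightarrow> complex"
  assumes closed: "\<And>x y s. x \<in> S \<Longrightarrow> y \<in> S \<Longrightarrow> x + scaleC s y \<in> S"
    and semilinear: "\<And>x y z s. x \<in> S \<Longrightarrow> y \<in> S \<Longrightarrow> z \<in> S \<Longrightarrow>
      q (x + scaleC s y) z = q x z + cnj s * q y z"
    and hermitian: "\<And>x y. x \<in> S \<Longrightarrow> y \<in> S \<Longrightarrow> q y x = cnj (q x y)"
    and nonneg: "\<And>x. x \<in> S \<Longrightarrow> 0 \<le> Re (q x x)"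
    and x: "x \<in> S" and y: "y \<in> S"
  shows "(cmod (q x y))\<^sup>2 \<le> Re (q x x) * Re (q y y)"
proof (rule quadratic_nonneg_imp_cmod_sq_le)
  fix s :: complex
  have xsy: "x + scaleC s y \<in> S" using closed x y .
  have "q x (x + scaleC s y) = cnj (q x x) + s * q x y"
    using hermitian[OF xsy x] semilinear[OF x y x] hermitian[OF x y] by simp
  moreover have "cnj s * q y (x + scaleC s y) = cnj (s * q x y) + cnj s * s * cnj (q y y)"
    using hermitian[OF xsy y] semilinear[OF x y y] by (simp add: distrib_left mult.assoc)
  ultimately have "q (x + scaleC s y) (x + scaleC s y)
      = cnj (q x x) + s * q x y + cnj (s * q x y) + cnj s * s * cnj (q y y)"
    using semilinear[OF x y xsy] by simp
  moreover have "cnj s * s = of_real ((cmod s)\<^sup>2)"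
    using complex_norm_square[of s] by (simp add: mult.commute)
  ultimately have "Re (q (x + scaleC s y) (x + scaleC s y))
      = Re (q x x) + 2 * Re (s * q x y) + (cmod s)\<^sup>2 * Re (q y y)"
    by (simp del: of_real_power)
  then show "0 \<le> Re (q x x) + 2 * Re (s * q x y) + (cmod s)\<^sup>2 * Re (q y y)"
    using nonneg[OF xsy] by simp
qed (rule nonneg[OF y])

lemma cinner_Cauchy_Schwarz: "cmod (cinner (x::'a::complex_inner) y) \<le> norm x * norm y"
proof -
  have "(cmod (cinner x y))\<^sup>2 \<le> Re (cinner x x) * Re (cinner y y)"
  proof (rule hermitian_form_Cauchy_Schwarz[where S = UNIV and q = cinner])
    show "cinner v u = cnj (cinner u v)" for u v :: 'a by (rule cinner_commute)
  qed (simp_all add: cinner_add_left cinner_scaleC_left cinner_ge_zero)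
  then have "(cmod (cinner x y))\<^sup>2 \<le> (norm x * norm y)\<^sup>2"
    by (simp add: norm_sq_eq_Re_cinner power_mult_distrib)
  then show ?thesis by (rule power2_le_imp_le) simp
qed

section \<open>Hilbert space geometry\<close>

lemma bounded_bilinear_cinner: "bounded_bilinear (cinner :: 'a::complex_inner \<Rightarrow> 'a \<Rightarrow> complex)"
proof
  fix x x' y :: 'a and r :: real
  show "cinner (x + x') y = cinner x y + cinner x' y" by (rule cinner_add_left)
  show "cinner y (x + x') = cinner y x + cinner y x'" by (rule cinner_add_right)
  show "cinner (r *\<^sub>R x) y = r *\<^sub>R cinner x y" "cinner x (r *\<^sub>R y) = r *\<^sub>R cinner x y"
    by (simp_all add: scaleC_of_real[symmetric] cinner_scaleC_left cinner_scaleC_right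
        scaleR_conv_of_real)
next
  show "\<exists>K. \<forall>x y::'a. norm (cinner x y) \<le> norm x * norm y * K"
    by (rule exI[of _ 1]) (simp add: cinner_Cauchy_Schwarz)
qed

lemmas tendsto_cinner [tendsto_intros] = bounded_bilinear.tendsto[OF bounded_bilinear_cinner]
lemmas continuous_on_cinner [continuous_intros] =
  bounded_bilinear.continuous_on[OF bounded_bilinear_cinner]

lemma bounded_linear_scaleC: "bounded_linear (scaleC c :: 'a::complex_inner \<Rightarrow> 'a)"
proof
  fix x y :: 'a and r :: real
  show "scaleC c (x + y) = scaleC c x + scaleC c y" by (rule scaleC_add_right)
  have "scaleC c (scaleC (of_real r) x) = scaleC (of_real r) (scaleC c x)"
    by (simp only: scaleC_scaleC mult.commute)
  then show "scaleC c (r *\<^sub>R x) = r *\<^sub>R scaleC c x" by (simp only: scaleC_of_real)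
  show "\<exists>K. \<forall>x::'a. norm (scaleC c x) \<le> norm x * K"
    by (rule exI[of _ "cmod c"]) (simp add: norm_scaleC mult.commute)
qed

lemmas tendsto_scaleC [tendsto_intros] = bounded_linear.tendsto[OF bounded_linear_scaleC]

lemma Cauchy_if_dist_le_mult:
  assumes "Cauchy g" and le: "\<And>m n. dist (f m) (f n) \<le> L * dist (g m) (g n)"
  shows "Cauchy f"
proof (rule metric_CauchyI)
  fix e :: real assume "e > 0"
  then have "e / (\<bar>L\<bar> + 1) > 0" by simp
  then obtain N where N: "\<And>m n. m \<ge> N \<Longrightarrow> n \<ge> N \<Longrightarrow> dist (g m) (g n) < e / (\<bar>L\<bar> + 1)"
    using \<open>Cauchy g\<close> metric_CauchyD by blast
  have "dist (f m) (f n) < e" if "m \<ge> N" "n \<ge> N" for m n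
  proof -
    have "dist (f m) (f n) \<le> \<bar>L\<bar> * dist (g m) (g n)"
      using le[of m n] by (smt (verit) mult_right_mono zero_le_dist)
    also have "\<dots> \<le> \<bar>L\<bar> * (e / (\<bar>L\<bar> + 1))"
      using N[OF that] by (intro mult_left_mono) auto
    also have "\<dots> < e" using \<open>e > 0\<close> by (simp add: field_simps)
    finally show ?thesis .
  qed
  then show "\<exists>N. \<forall>m\<ge>N. \<forall>n\<ge>N. dist (f m) (f n) < e" by blast
qed

lemma orthogonal_dense_eq_0:
  fixes S :: "'a::complex_inner set"
  assumes "closure S = UNIV" and "\<And>x. x \<in> S \<Longrightarrow> cinner x z = 0"
  shows "z = 0"
proof -
  have "z \<in> closure S" using assms(1) by simp
  then obtain s where s: "\<And>n. s n \<in> S" "s \<longlonglongrightarrow> z" by (meson closure_sequential)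
  have "(\<lambda>n. cinner (s n) z) \<longlonglongrightarrow> cinner z z" by (intro tendsto_intros s(2))
  moreover have "(\<lambda>n. cinner (s n) z) = (\<lambda>n. 0)" using s(1) assms(2) by auto
  ultimately have "cinner z z = 0" by (simp add: LIMSEQ_const_iff)
  then show ?thesis by (simp add: cinner_eq_zero_iff)
qed

lemma norm_le_if_dense_bound:
  fixes S :: "'a::complex_inner set"
  assumes "closure S = UNIV" and "c \<ge> 0"
    and bound: "\<And>y. y \<in> S \<Longrightarrow> cmod (cinner w y) \<le> c * norm y"
  shows "norm w \<le> c"
proof -
  have "w \<in> closure S" using assms(1) by simp
  then obtain s where s: "\<And>n. s n \<in> S" "s \<longlonglongrightarrow> w" by (meson closure_sequential)
  have "(\<lambda>n. cmod (cinner w (s n))) \<longlonglongrightarrow> cmod (cinner w w)" by (intro tendsto_intros s(2))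
  moreover have "(\<lambda>n. c * norm (s n)) \<longlonglongrightarrow> c * norm w" by (intro tendsto_intros s(2))
  ultimately have "cmod (cinner w w) \<le> c * norm w"
    using bound s(1) by (intro LIMSEQ_le[of "\<lambda>n. cmod (cinner w (s n))" _ "\<lambda>n. c * norm (s n)"]) auto
  moreover have "cmod (cinner w w) = norm w * norm w"
    by (simp add: cinner_self_eq_norm_sq power2_eq_square norm_mult del: of_real_power)
  ultimately have "norm w * norm w \<le> c * norm w" by simp
  then show ?thesis using \<open>c \<ge> 0\<close> by (cases "norm w = 0") (auto simp: mult_le_cancel_right)
qed

definition csubspace :: "'a::complex_inner set \<Rightarrow> bool" where
  "csubspace S \<longleftrightarrow> 0 \<in> S \<and> (\<forall>x\<in>S. \<forall>y\<in>S. x + y \<in> S) \<and> (\<forall>c. \<forall>x\<in>S. scaleC c x \<in> S)"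

lemma csubspaceI:
  "0 \<in> S \<Longrightarrow> (\<And>x y. x \<in> S \<Longrightarrow> y \<in> S \<Longrightarrow> x + y \<in> S) \<Longrightarrow>
    (\<And>c x. x \<in> S \<Longrightarrow> scaleC c x \<in> S) \<Longrightarrow> csubspace S"
  by (simp add: csubspace_def)

lemma csubspace_0: "csubspace S \<Longrightarrow> 0 \<in> S"
  and csubspace_add: "csubspace S \<Longrightarrow> x \<in> S \<Longrightarrow> y \<in> S \<Longrightarrow> x + y \<in> S"
  and csubspace_scaleC: "csubspace S \<Longrightarrow> x \<in> S \<Longrightarrow> scaleC c x \<in> S"
  by (simp_all add: csubspace_def)

lemma csubspace_closure:
  assumes S: "csubspace S"
  shows "csubspace (closure S)"
proof (rule csubspaceI)
  show "0 \<in> closure S" using csubspace_0[OF S] closure_subset by blast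
next
  fix x y assume "x \<in> closure S" "y \<in> closure S"
  then obtain a b where a: "\<And>n. a n \<in> S" "a \<longlonglongrightarrow> x" and b: "\<And>n. b n \<in> S" "b \<longlonglongrightarrow> y"
    by (meson closure_sequential)
  have "(\<lambda>n. a n + b n) \<longlonglongrightarrow> x + y" by (intro tendsto_intros a b)
  moreover have "a n + b n \<in> S" for n using csubspace_add[OF S a(1) b(1)] .
  ultimately show "x + y \<in> closure S" by (meson closure_sequential)
next
  fix c x assume "x \<in> closure S"
  then obtain a where a: "\<And>n. a n \<in> S" "a \<longlonglongrightarrow> x" by (meson closure_sequential)
  have "(\<lambda>n. scaleC c (a n)) \<longlonglongrightarrow> scaleC c x" by (intro tendsto_intros a)
  moreover have "scaleC c (a n) \<in> S" for n using csubspace_scaleC[OF S a(1)] .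
  ultimately show "scaleC c x \<in> closure S" by (meson closure_sequential)
qed

lemma csubspace_minimizing_sequence_Cauchy:
  fixes M :: "'a::complex_inner set"
  assumes M: "csubspace M" and m: "\<And>n. m n \<in> M"
    and d_le: "\<And>y. y \<in> M \<Longrightarrow> d \<le> norm (h - y)"
    and lim: "(\<lambda>n. norm (h - m n)) \<longlonglongrightarrow> d"
  shows "Cauchy m"
proof (rule metric_CauchyI)
  have "0 \<le> d" using lim by (rule LIMSEQ_le_const) simp
  define e where "e n = (norm (h - m n))\<^sup>2 - d\<^sup>2" for n
  have e_lim: "e \<longlonglongrightarrow> 0"
    unfolding e_def using tendsto_diff[OF tendsto_power[OF lim, of 2] tendsto_const[of "d\<^sup>2"]] by simp
  have parallelogram: "(norm (m n - m k))\<^sup>2 \<le> 2 * e n + 2 * e k" for n k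
  proof -
    have mid: "scaleC (1/2) (m n + m k) \<in> M"
      using M m by (simp add: csubspace_add csubspace_scaleC)
    have "scaleC (1/2) (m n + m k) = (1/2) *\<^sub>R (m n + m k)"
      using scaleC_of_real[of "1/2" "m n + m k"] by simp
    then have "(h - m n) + (h - m k) = 2 *\<^sub>R (h - scaleC (1/2) (m n + m k))"
      by (simp add: algebra_simps scaleR_2)
    then have "(norm ((h - m n) + (h - m k)))\<^sup>2 = 4 * (norm (h - scaleC (1/2) (m n + m k)))\<^sup>2"
      by (simp add: power2_eq_square)
    moreover have "d\<^sup>2 \<le> (norm (h - scaleC (1/2) (m n + m k)))\<^sup>2"
      using d_le[OF mid] \<open>0 \<le> d\<close> by (intro power_mono) auto
    moreover have "norm ((h - m n) - (h - m k)) = norm (m n - m k)"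
      by (simp add: norm_minus_commute)
    ultimately show ?thesis
      using parallelogram_law[of "h - m n" "h - m k"] unfolding e_def by simp
  qed
  fix r :: real assume "r > 0"
  then have "\<forall>\<^sub>F n in sequentially. e n < r\<^sup>2 / 4"
    using e_lim by (intro order_tendstoD) auto
  then obtain N where N: "\<And>n. n \<ge> N \<Longrightarrow> e n < r\<^sup>2 / 4" by (auto simp: eventually_sequentially)
  have "dist (m n) (m k) < r" if "n \<ge> N" "k \<ge> N" for n k
  proof -
    have "(norm (m n - m k))\<^sup>2 < r\<^sup>2" using parallelogram[of n k] N[OF that(1)] N[OF that(2)] by simp
    then show ?thesis using \<open>r > 0\<close> by (simp add: dist_norm power_less_imp_less_base)
  qed
  then show "\<exists>N. \<forall>n\<ge>N. \<forall>k\<ge>N. dist (m n) (m k) < r" by blast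
qed

lemma closed_csubspace_nearest_point:
  fixes M :: "'a::chilbert_space set"
  assumes "closed M" and M: "csubspace M"
  obtains m0 where "m0 \<in> M" "\<And>m. m \<in> M \<Longrightarrow> norm (h - m0) \<le> norm (h - m)"
proof -
  define d where "d = (INF m\<in>M. norm (h - m))"
  have M_ne: "M \<noteq> {}" using csubspace_0[OF M] by blast
  have bdd: "bdd_below ((\<lambda>m. norm (h - m)) ` M)" by (rule bdd_belowI[of _ 0]) auto
  have d_le: "d \<le> norm (h - m)" if "m \<in> M" for m
    unfolding d_def using bdd that by (rule cINF_lower)
  have "\<forall>n. \<exists>m. m \<in> M \<and> norm (h - m) < d + 1 / Suc n"
  proof
    fix n
    have "(INF m\<in>M. norm (h - m)) < d + 1 / Suc n" unfolding d_def by simp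
    then show "\<exists>m. m \<in> M \<and> norm (h - m) < d + 1 / Suc n"
      unfolding cINF_less_iff[OF M_ne bdd] by blast
  qed
  from choice[OF this] obtain m where "\<forall>n. m n \<in> M \<and> norm (h - m n) < d + 1 / Suc n"
    by blast
  then have m: "\<And>n. m n \<in> M" and m_near: "\<And>n. norm (h - m n) < d + 1 / Suc n"
    by simp_all
  have "(\<lambda>n. 1 / Suc n) \<longlonglongrightarrow> (0::real)" using LIMSEQ_Suc[OF lim_const_over_n[of 1]] by simp
  then have upper: "(\<lambda>n. d + 1 / Suc n) \<longlonglongrightarrow> d"
    using tendsto_add[OF tendsto_const[of d]] by fastforce
  have lim: "(\<lambda>n. norm (h - m n)) \<longlonglongrightarrow> d"
  proof (rule tendsto_sandwich[of "\<lambda>_. d" _ _ "\<lambda>n. d + 1 / Suc n"])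
    show "\<forall>\<^sub>F n in sequentially. d \<le> norm (h - m n)"
      by (intro always_eventually allI d_le m)
    show "\<forall>\<^sub>F n in sequentially. norm (h - m n) \<le> d + 1 / Suc n"
      by (intro always_eventually allI less_imp_le m_near)
  qed (rule tendsto_const, rule upper)
  have "Cauchy m" using M m d_le lim by (rule csubspace_minimizing_sequence_Cauchy)
  then obtain m0 where m0: "m \<longlonglongrightarrow> m0" using Cauchy_convergent convergent_def by blast
  have "(\<lambda>n. norm (h - m n)) \<longlonglongrightarrow> norm (h - m0)" by (intro tendsto_intros m0)
  then have "norm (h - m0) = d" using lim by (rule LIMSEQ_unique)
  show ?thesis
  proof (rule that)
    show "m0 \<in> M" using closed_sequentially[OF \<open>closed M\<close> m m0] .
    show "norm (h - m0) \<le> norm (h - m')" if "m' \<in> M" for m'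
      using d_le[OF that] \<open>norm (h - m0) = d\<close> by simp
  qed
qed

lemma orthogonal_if_nearest:
  fixes w v :: "'a::complex_inner"
  assumes "\<And>s. norm w \<le> norm (w - scaleC s v)"
  shows "cinner w v = 0"
proof -
  have "(cmod (- cinner w v))\<^sup>2 \<le> 0 * (norm v)\<^sup>2"
  proof (rule quadratic_nonneg_imp_cmod_sq_le)
    fix s :: complex
    have "(norm w)\<^sup>2 \<le> (norm (w - scaleC s v))\<^sup>2" using assms[of s] by (simp add: power_mono)
    then show "0 \<le> 0 + 2 * Re (s * - cinner w v) + (cmod s)\<^sup>2 * (norm v)\<^sup>2"
      by (simp add: norm_diff_sq norm_scaleC power_mult_distrib cinner_scaleC_right)
  qed simp
  then show ?thesis by simp
qed

lemma closed_csubspace_eq_UNIV: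
  fixes M :: "'a::chilbert_space set"
  assumes "closed M" and M: "csubspace M"
    and orthogonal: "\<And>w. (\<And>m. m \<in> M \<Longrightarrow> cinner m w = 0) \<Longrightarrow> w = 0"
  shows "M = UNIV"
proof -
  have "h \<in> M" for h
  proof -
    obtain m0 where m0: "m0 \<in> M" and nearest: "\<And>m. m \<in> M \<Longrightarrow> norm (h - m0) \<le> norm (h - m)"
      using closed_csubspace_nearest_point[OF assms(1,2)] by blast
    have "cinner (h - m0) v = 0" if "v \<in> M" for v
    proof (rule orthogonal_if_nearest)
      fix s
      have "m0 + scaleC s v \<in> M" using M m0 that by (simp add: csubspace_add csubspace_scaleC)
      then show "norm (h - m0) \<le> norm (h - m0 - scaleC s v)"
        using nearest by (simp add: algebra_simps)
    qed
    then have "h - m0 = 0"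
      by (intro orthogonal) (simp add: cinner_commute[of _ "h - m0"])
    then show ?thesis using m0 by simp
  qed
  then show ?thesis by blast
qed

lemma csubspace_dense:
  fixes S :: "'a::chilbert_space set"
  assumes "csubspace S" and orthogonal: "\<And>w. (\<And>y. y \<in> S \<Longrightarrow> cinner y w = 0) \<Longrightarrow> w = 0"
  shows "closure S = UNIV"
proof (rule closed_csubspace_eq_UNIV)
  fix w assume "\<And>m. m \<in> closure S \<Longrightarrow> cinner m w = 0"
  then show "w = 0" using orthogonal closure_subset by blast
qed (simp_all add: csubspace_closure assms(1))

lemma closed_cover_contains_ball:
  fixes E :: "nat \<Rightarrow> 'a::{metric_space, complete_space} set"
  assumes "\<And>n. closed (E n)" and "(\<Union>n. E n) = UNIV"
  obtains n x r where "r > 0" "ball x r \<subseteq> E n"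
proof -
  have "\<exists>n. interior (E n) \<noteq> {}"
  proof (rule ccontr)
    assume "\<nexists>n. interior (E n) \<noteq> {}"
    then have "\<And>T. T \<in> range E \<Longrightarrow> closedin euclidean T \<and> euclidean interior_of T = {}"
      using assms(1) by (auto simp: closed_closedin[symmetric])
    then have "euclidean interior_of (\<Union>n. E n) = {}"
      by (intro Baire_category_alt) (auto simp: completely_metrizable_space_euclidean)
    then show False using assms(2) by simp
  qed
  then obtain n x where "x \<in> interior (E n)" by blast
  then obtain r where "r > 0" "ball x r \<subseteq> interior (E n)"
    using open_contains_ball open_interior by blast
  then show ?thesis using that interior_subset by blast
qed

theorem uniform_boundedness:
  fixes g :: "'i \<Rightarrow> 'a::chilbert_space"
  assumes pointwise: "\<And>x. \<exists>K. \<forall>i\<in>I. cmod (cinner x (g i)) \<le> K"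
  shows "\<exists>K. \<forall>i\<in>I. norm (g i) \<le> K"
proof -
  define E where "E n = {x. \<forall>i\<in>I. cmod (cinner x (g i)) \<le> real n}" for n
  have "closed (E n)" for n
  proof -
    have "E n = (\<Inter>i\<in>I. {x. cmod (cinner x (g i)) \<le> real n})" unfolding E_def by auto
    moreover have "closed {x. cmod (cinner x (g i)) \<le> real n}" for i
      by (intro closed_Collect_le continuous_on_norm continuous_on_cinner continuous_on_id
          continuous_on_const)
    ultimately show ?thesis by auto
  qed
  moreover have "(\<Union>n. E n) = UNIV"
  proof -
    have "x \<in> (\<Union>n. E n)" for x
    proof -
      obtain K where K: "\<forall>i\<in>I. cmod (cinner x (g i)) \<le> K" using pointwise by blast
      obtain n :: nat where "K \<le> real n" using real_arch_simple by blast
      then have "x \<in> E n" unfolding E_def using K by (auto intro: order_trans)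
      then show ?thesis by blast
    qed
    then show ?thesis by blast
  qed
  ultimately obtain n x0 r where r: "r > 0" "ball x0 r \<subseteq> E n"
    using closed_cover_contains_ball by metis
  have "norm (g i) \<le> 4 * real n / r" if i: "i \<in> I" for i
  proof (cases "g i = 0")
    case False
    define z where "z = scaleC (of_real (r / 2 / norm (g i))) (g i)"
    have "norm z = \<bar>r / 2 / norm (g i)\<bar> * norm (g i)" unfolding z_def norm_scaleC norm_of_real ..
    then have "norm z = r / 2" using False r by simp
    then have "x0 + z \<in> E n" "x0 \<in> E n" using r by (auto intro!: subsetD[OF r(2)] simp: dist_norm)
    then have "cmod (cinner (x0 + z) (g i)) \<le> real n" "cmod (cinner x0 (g i)) \<le> real n"
      unfolding E_def using i by auto
    moreover have "cmod (cinner z (g i)) = r / 2 * norm (g i)"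
    proof -
      have "cinner z (g i) = of_real (r / 2 * norm (g i))"
        using False by (simp add: z_def cinner_scaleC_left cinner_self_eq_norm_sq power2_eq_square)
      then show ?thesis using r by (simp only: norm_of_real) simp
    qed
    moreover have "cmod (cinner z (g i)) \<le> cmod (cinner (x0 + z) (g i)) + cmod (cinner x0 (g i))"
      using norm_triangle_ineq4[of "cinner (x0 + z) (g i)" "cinner x0 (g i)"]
      by (simp add: cinner_add_left)
    ultimately have "r / 2 * norm (g i) \<le> 2 * real n" by linarith
    then show ?thesis using r by (simp add: field_simps)
  qed (use r in simp)
  then show ?thesis by blast
qed

section \<open>Self-adjoint operators\<close>

lemma self_adjoint_dense: "self_adjoint A \<Longrightarrow> closure (dom A) = UNIV"
  by (simp add: self_adjoint_def densely_defined_def)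

lemma self_adjoint_eq_Some_iff:
  fixes A :: "('a::complex_inner) op"
  assumes sa: "self_adjoint A"
  shows "A y = Some z \<longleftrightarrow> (\<forall>x\<in>dom A. cinner (the (A x)) y = cinner x z)"
proof -
  define P where "P z \<longleftrightarrow> (\<forall>x\<in>dom A. cinner (the (A x)) y = cinner x z)" for z
  have unique: "z1 = z2" if "P z1" "P z2" for z1 z2
  proof -
    have "z1 - z2 = 0"
      by (rule orthogonal_dense_eq_0[OF self_adjoint_dense[OF sa]])
        (use that in \<open>simp add: P_def cinner_diff_right\<close>)
    then show ?thesis by simp
  qed
  have the_eq: "(THE z. P z) = z" if "P z" for z
    using that unique by (blast intro: the_equality)
  have "A y = op_adjoint A y" using sa by (simp add: self_adjoint_def)
  also have "\<dots> = (if \<exists>z. P z then Some (THE z. P z) else None)"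
    unfolding op_adjoint_def P_def by simp
  finally have A_y: "A y = (if \<exists>z. P z then Some (THE z. P z) else None)" .
  have "A y = Some z \<longleftrightarrow> P z"
  proof
    assume "A y = Some z"
    then obtain z' where "P z'" "(THE z. P z) = z" unfolding A_y by (auto split: if_splits)
    then show "P z" using the_eq by simp
  next
    assume "P z"
    then show "A y = Some z" unfolding A_y using the_eq by auto
  qed
  then show ?thesis by (simp add: P_def)
qed

context
  fixes A :: "('a::complex_inner) op"
  assumes sa: "self_adjoint A"
begin

lemma self_adjoint_symmetric:
  "x \<in> dom A \<Longrightarrow> y \<in> dom A \<Longrightarrow> cinner (the (A x)) y = cinner x (the (A y))"
  using self_adjoint_eq_Some_iff[OF sa, of y "the (A y)"] by auto

lemma self_adjoint_add:
  "x \<in> dom A \<Longrightarrow> y \<in> dom A \<Longrightarrow> A (x + y) = Some (the (A x) + the (A y))"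
  unfolding self_adjoint_eq_Some_iff[OF sa] by (simp add: self_adjoint_symmetric cinner_add_right)

lemma self_adjoint_scaleC: "x \<in> dom A \<Longrightarrow> A (scaleC c x) = Some (scaleC c (the (A x)))"
  unfolding self_adjoint_eq_Some_iff[OF sa] by (simp add: self_adjoint_symmetric cinner_scaleC_right)

lemma self_adjoint_diff:
  "x \<in> dom A \<Longrightarrow> y \<in> dom A \<Longrightarrow> A (x - y) = Some (the (A x) - the (A y))"
  unfolding self_adjoint_eq_Some_iff[OF sa]
  by (simp add: self_adjoint_symmetric cinner_diff_right)

lemma self_adjoint_0: "A 0 = Some 0"
  unfolding self_adjoint_eq_Some_iff[OF sa] by simp

lemma self_adjoint_dom_add: "x \<in> dom A \<Longrightarrow> y \<in> dom A \<Longrightarrow> x + y \<in> dom A"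
  and self_adjoint_dom_diff: "x \<in> dom A \<Longrightarrow> y \<in> dom A \<Longrightarrow> x - y \<in> dom A"
  and self_adjoint_dom_scaleC: "x \<in> dom A \<Longrightarrow> scaleC c x \<in> dom A"
  using self_adjoint_add self_adjoint_diff self_adjoint_scaleC by blast+

lemma self_adjoint_cinner_self_real:
  "x \<in> dom A \<Longrightarrow> cinner (the (A x)) x = of_real (Re (cinner (the (A x)) x))"
  using self_adjoint_symmetric[of x x] cinner_commute[of x "the (A x)"]
  by (simp add: complex_eq_iff)

lemma self_adjoint_closed_graph:
  assumes x: "\<And>n. x n \<in> dom A" and "x \<longlonglongrightarrow> a" and "(\<lambda>n. the (A (x n))) \<longlonglongrightarrow> b"
  shows "A a = Some b"
  unfolding self_adjoint_eq_Some_iff[OF sa]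
proof
  fix u assume u: "u \<in> dom A"
  have "(\<lambda>n. cinner (the (A u)) (x n)) \<longlonglongrightarrow> cinner (the (A u)) a"
    by (intro tendsto_intros assms(2))
  moreover have "(\<lambda>n. cinner (the (A u)) (x n)) \<longlonglongrightarrow> cinner u b"
    unfolding self_adjoint_symmetric[OF u x] by (intro tendsto_intros assms(3))
  ultimately show "cinner (the (A u)) a = cinner u b" by (rule LIMSEQ_unique)
qed

end

lemma positive_op_form_eq_0_imp_eq_0:
  fixes A :: "('a::complex_inner) op"
  assumes pos: "positive_op A" and y: "y \<in> dom A" and form: "Re (cinner (the (A y)) y) = 0"
  shows "the (A y) = 0"
proof -
  have sa: "self_adjoint A" and nonneg: "\<And>x. x \<in> dom A \<Longrightarrow> 0 \<le> Re (cinner (the (A x)) x)"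
    using pos unfolding positive_op_def by auto
  have "(cmod (cinner (the (A y)) v))\<^sup>2 \<le> Re (cinner (the (A y)) y) * Re (cinner (the (A v)) v)"
    if v: "v \<in> dom A" for v
  proof (rule hermitian_form_Cauchy_Schwarz[where S = "dom A" and q = "\<lambda>x. cinner (the (A x))"])
    show "x + scaleC s z \<in> dom A" if "x \<in> dom A" "z \<in> dom A" for x z s
      using that by (simp add: self_adjoint_dom_add[OF sa] self_adjoint_dom_scaleC[OF sa])
    show "cinner (the (A (x + scaleC s z))) w = cinner (the (A x)) w + cnj s * cinner (the (A z)) w"
      if "x \<in> dom A" "z \<in> dom A" for x z w s
      using that self_adjoint_add[OF sa] self_adjoint_scaleC[OF sa] self_adjoint_dom_scaleC[OF sa]
      by (simp add: cinner_add_left cinner_scaleC_left)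
    show "cinner (the (A z)) x = cnj (cinner (the (A x)) z)" if "x \<in> dom A" "z \<in> dom A" for x z
      using that by (simp add: self_adjoint_symmetric[OF sa] flip: cinner_commute)
  qed (use nonneg y v in auto)
  then have "cinner (the (A y)) v = 0" if "v \<in> dom A" for v
    using that form by simp
  then show ?thesis
    by (intro orthogonal_dense_eq_0[OF self_adjoint_dense[OF sa]])
      (simp add: cinner_commute[of _ "the (A y)"])
qed

context
  fixes A :: "('a::chilbert_space) op" and t :: real
  assumes sa: "self_adjoint A"
begin

lemma self_adjoint_norm_shift_sq:
  assumes "x \<in> dom A"
  shows "(norm (the (A x) + scaleC (\<i> * t) x))\<^sup>2 = (norm (the (A x)))\<^sup>2 + t\<^sup>2 * (norm x)\<^sup>2"
proof -
  have "Re (cinner (the (A x)) (scaleC (\<i> * t) x)) = 0"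
    by (subst cinner_scaleC_right, subst self_adjoint_cinner_self_real[OF sa assms]) simp
  then show ?thesis by (simp add: norm_add_sq norm_scaleC norm_mult power_mult_distrib)
qed

lemma self_adjoint_norm_le_shift:
  assumes "x \<in> dom A"
  shows "\<bar>t\<bar> * norm x \<le> norm (the (A x) + scaleC (\<i> * t) x)"
proof (rule power2_le_imp_le)
  show "(\<bar>t\<bar> * norm x)\<^sup>2 \<le> (norm (the (A x) + scaleC (\<i> * t) x))\<^sup>2"
    unfolding self_adjoint_norm_shift_sq[OF assms] by (simp add: power_mult_distrib)
qed simp

lemma self_adjoint_shift_diff:
  "x \<in> dom A \<Longrightarrow> y \<in> dom A \<Longrightarrow> the (A (x - y)) + scaleC (\<i> * t) (x - y)
    = (the (A x) + scaleC (\<i> * t) x) - (the (A y) + scaleC (\<i> * t) y)"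
  by (simp add: self_adjoint_diff[OF sa] scaleC_diff_right)

lemma csubspace_self_adjoint_shift_range:
  "csubspace ((\<lambda>x. the (A x) + scaleC (\<i> * t) x) ` dom A)"
proof (rule csubspaceI)
  show "0 \<in> (\<lambda>x. the (A x) + scaleC (\<i> * t) x) ` dom A"
    using self_adjoint_0[OF sa] by (auto intro!: image_eqI[of _ _ 0])
next
  fix x y assume "x \<in> (\<lambda>x. the (A x) + scaleC (\<i> * t) x) ` dom A"
    "y \<in> (\<lambda>x. the (A x) + scaleC (\<i> * t) x) ` dom A"
  then obtain u v where "u \<in> dom A" "v \<in> dom A"
    and "x = the (A u) + scaleC (\<i> * t) u" "y = the (A v) + scaleC (\<i> * t) v" by blast
  then show "x + y \<in> (\<lambda>x. the (A x) + scaleC (\<i> * t) x) ` dom A"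
    by (intro image_eqI[of _ _ "u + v"])
      (simp_all add: self_adjoint_add[OF sa] self_adjoint_dom_add[OF sa] scaleC_add_right)
next
  fix c x assume "x \<in> (\<lambda>x. the (A x) + scaleC (\<i> * t) x) ` dom A"
  then obtain u where "u \<in> dom A" "x = the (A u) + scaleC (\<i> * t) u" by blast
  then show "scaleC c x \<in> (\<lambda>x. the (A x) + scaleC (\<i> * t) x) ` dom A"
    by (intro image_eqI[of _ _ "scaleC c u"])
      (simp_all add: self_adjoint_scaleC[OF sa] self_adjoint_dom_scaleC[OF sa]
        scaleC_add_right scaleC_scaleC mult.commute[of c])
qed

lemma closed_self_adjoint_shift_range:
  assumes t: "t \<noteq> 0"
  shows "closed ((\<lambda>x. the (A x) + scaleC (\<i> * t) x) ` dom A)"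
proof (rule closed_sequential_limits[THEN iffD2], intro allI impI, elim conjE)
  fix y l assume "\<forall>n. y n \<in> (\<lambda>x. the (A x) + scaleC (\<i> * t) x) ` dom A" and "y \<longlonglongrightarrow> l"
  then have "\<forall>n. \<exists>u. u \<in> dom A \<and> y n = the (A u) + scaleC (\<i> * t) u" by blast
  from choice[OF this] obtain x where "\<forall>n. x n \<in> dom A \<and> y n = the (A (x n)) + scaleC (\<i> * t) (x n)"
    by blast
  then have x: "\<And>n. x n \<in> dom A" and y: "\<And>n. y n = the (A (x n)) + scaleC (\<i> * t) (x n)"
    by simp_all
  have "dist (x m) (x n) \<le> 1 / \<bar>t\<bar> * dist (y m) (y n)" for m n
    using self_adjoint_norm_le_shift[OF self_adjoint_dom_diff[OF sa x x], of m n] t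
    by (simp add: dist_norm self_adjoint_shift_diff[OF x x] y field_simps)
  then have "Cauchy x" by (rule Cauchy_if_dist_le_mult[OF LIMSEQ_imp_Cauchy[OF \<open>y \<longlonglongrightarrow> l\<close>]])
  then obtain a where xa: "x \<longlonglongrightarrow> a" using Cauchy_convergent convergent_def by blast
  have "(\<lambda>n. y n - scaleC (\<i> * t) (x n)) \<longlonglongrightarrow> l - scaleC (\<i> * t) a"
    by (intro tendsto_intros \<open>y \<longlonglongrightarrow> l\<close> xa)
  then have "A a = Some (l - scaleC (\<i> * t) a)"
    using self_adjoint_closed_graph[OF sa x xa] by (simp add: y)
  then show "l \<in> (\<lambda>x. the (A x) + scaleC (\<i> * t) x) ` dom A"
    by (intro image_eqI[of _ _ a]) auto
qed

lemma self_adjoint_shift_range_orthogonal: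
  assumes t: "t \<noteq> 0"
    and "\<And>x. x \<in> dom A \<Longrightarrow> cinner (the (A x) + scaleC (\<i> * t) x) w = 0"
  shows "w = 0"
proof -
  have "A w = Some (scaleC (\<i> * t) w)"
    unfolding self_adjoint_eq_Some_iff[OF sa]
    using assms(2)
    by (simp add: cinner_add_left cinner_scaleC_left cinner_scaleC_right eq_neg_iff_add_eq_0)
  then have "w \<in> dom A" and "cinner (the (A w)) w = - \<i> * t * cinner w w"
    by (auto simp: cinner_scaleC_left)
  then have "t * (norm w)\<^sup>2 = 0"
    using self_adjoint_cinner_self_real[OF sa \<open>w \<in> dom A\<close>]
    by (simp add: cinner_self_eq_norm_sq complex_eq_iff)
  then show "w = 0" using t by simp
qed

lemma self_adjoint_shift_surj:
  assumes t: "t \<noteq> 0"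
  shows "\<exists>x\<in>dom A. the (A x) + scaleC (\<i> * t) x = h"
proof -
  have "(\<lambda>x. the (A x) + scaleC (\<i> * t) x) ` dom A = UNIV"
    using closed_self_adjoint_shift_range[OF t] csubspace_self_adjoint_shift_range
  proof (rule closed_csubspace_eq_UNIV)
    fix w assume "\<And>m. m \<in> (\<lambda>x. the (A x) + scaleC (\<i> * t) x) ` dom A \<Longrightarrow> cinner m w = 0"
    then show "w = 0" by (intro self_adjoint_shift_range_orthogonal[OF t]) blast
  qed
  then have "h \<in> (\<lambda>x. the (A x) + scaleC (\<i> * t) x) ` dom A" by simp
  then show ?thesis by blast
qed

end

section \<open>The operator A squared plus one\<close>

lemma dom_op_mult_self_iff: "x \<in> dom (op_mult A A) \<longleftrightarrow> x \<in> dom A \<and> the (A x) \<in> dom A"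
  unfolding op_mult_def by (auto simp: map_comp_def split: option.splits)

definition sq_plus_id :: "('a::complex_inner) op \<Rightarrow> 'a \<Rightarrow> 'a" where
  "sq_plus_id A x = the (A (the (A x))) + x"

(* Meaningful only for self-adjoint A, where A^2 + 1 maps D(A^2) bijectively onto the space. *)
definition sq_plus_id_inv :: "('a::complex_inner) op \<Rightarrow> 'a \<Rightarrow> 'a" where
  "sq_plus_id_inv A h = (SOME x. x \<in> dom (op_mult A A) \<and> sq_plus_id A x = h)"

context
  fixes A :: "('a::chilbert_space) op"
  assumes sa: "self_adjoint A"
begin

lemma dom_sq_0: "0 \<in> dom (op_mult A A)"
  and dom_sq_add:
    "x \<in> dom (op_mult A A) \<Longrightarrow> y \<in> dom (op_mult A A) \<Longrightarrow> x + y \<in> dom (op_mult A A)"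
  and dom_sq_diff:
    "x \<in> dom (op_mult A A) \<Longrightarrow> y \<in> dom (op_mult A A) \<Longrightarrow> x - y \<in> dom (op_mult A A)"
  and dom_sq_scaleC: "x \<in> dom (op_mult A A) \<Longrightarrow> scaleC c x \<in> dom (op_mult A A)"
  by (auto simp: dom_op_mult_self_iff self_adjoint_0[OF sa] self_adjoint_add[OF sa]
      self_adjoint_diff[OF sa] self_adjoint_scaleC[OF sa] self_adjoint_dom_add[OF sa]
      self_adjoint_dom_diff[OF sa] self_adjoint_dom_scaleC[OF sa])

lemma sq_plus_id_0: "sq_plus_id A 0 = 0"
  by (simp add: sq_plus_id_def self_adjoint_0[OF sa])

lemma sq_plus_id_add:
  "x \<in> dom (op_mult A A) \<Longrightarrow> y \<in> dom (op_mult A A) \<Longrightarrow>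
    sq_plus_id A (x + y) = sq_plus_id A x + sq_plus_id A y"
  by (auto simp: sq_plus_id_def dom_op_mult_self_iff self_adjoint_add[OF sa])

lemma sq_plus_id_diff:
  "x \<in> dom (op_mult A A) \<Longrightarrow> y \<in> dom (op_mult A A) \<Longrightarrow>
    sq_plus_id A (x - y) = sq_plus_id A x - sq_plus_id A y"
  by (auto simp: sq_plus_id_def dom_op_mult_self_iff self_adjoint_diff[OF sa])

lemma sq_plus_id_scaleC:
  "x \<in> dom (op_mult A A) \<Longrightarrow> sq_plus_id A (scaleC c x) = scaleC c (sq_plus_id A x)"
  by (auto simp: sq_plus_id_def dom_op_mult_self_iff self_adjoint_scaleC[OF sa] scaleC_add_right)

lemma sq_plus_id_symmetric:
  "x \<in> dom (op_mult A A) \<Longrightarrow> y \<in> dom (op_mult A A) \<Longrightarrow>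
    cinner (sq_plus_id A x) y = cinner x (sq_plus_id A y)"
  by (auto simp: sq_plus_id_def dom_op_mult_self_iff self_adjoint_symmetric[OF sa]
      cinner_add_left cinner_add_right)

lemma cinner_sq_plus_id_self:
  "x \<in> dom (op_mult A A) \<Longrightarrow>
    cinner (sq_plus_id A x) x = of_real ((norm (the (A x)))\<^sup>2 + (norm x)\<^sup>2)"
  by (auto simp: sq_plus_id_def dom_op_mult_self_iff self_adjoint_symmetric[OF sa]
      cinner_add_left cinner_self_eq_norm_sq)

lemma sq_plus_id_eq_0_imp_eq_0:
  assumes "x \<in> dom (op_mult A A)" and "sq_plus_id A x = 0"
  shows "x = 0"
proof -
  have "of_real ((norm (the (A x)))\<^sup>2 + (norm x)\<^sup>2) = (0::complex)"
    using cinner_sq_plus_id_self[OF assms(1)] assms(2) by simp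
  then have "(norm (the (A x)))\<^sup>2 + (norm x)\<^sup>2 = 0" by (simp only: of_real_eq_0_iff)
  then show ?thesis by (simp add: add_nonneg_eq_0_iff)
qed

(* A^2 + 1 = (A - i)(A + i), and both factors are onto. *)

lemma sq_plus_id_surj: "\<exists>x\<in>dom (op_mult A A). sq_plus_id A x = h"
proof -
  obtain y where y: "y \<in> dom A" "the (A y) + scaleC (\<i> * of_real (-1)) y = h"
    using self_adjoint_shift_surj[OF sa, of "-1" h] by auto
  obtain x where x: "x \<in> dom A" "the (A x) + scaleC (\<i> * of_real 1) x = y"
    using self_adjoint_shift_surj[OF sa, of 1 y] by auto
  have Ax: "the (A x) = y - scaleC \<i> x" using x(2) by (simp add: algebra_simps)
  have ix: "scaleC \<i> x \<in> dom A" using self_adjoint_dom_scaleC[OF sa x(1)] .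
  have "the (A (the (A x))) = the (A (y - scaleC \<i> x))" by (simp only: Ax)
  also have "\<dots> = the (A y) - scaleC \<i> (the (A x))"
    using self_adjoint_diff[OF sa y(1) ix] self_adjoint_scaleC[OF sa x(1), of \<i>] by simp
  also have "\<dots> = the (A y) - scaleC \<i> y - x"
    by (simp only: Ax) (simp add: scaleC_diff_right scaleC_scaleC scaleC_minus_left)
  finally have "sq_plus_id A x = h"
    using y(2) by (simp add: sq_plus_id_def scaleC_minus_left)
  moreover have "x \<in> dom (op_mult A A)"
    unfolding dom_op_mult_self_iff Ax using x(1) y(1) self_adjoint_dom_diff[OF sa y(1) ix] by simp
  ultimately show ?thesis by blast
qed

lemma sq_plus_id_inv: "sq_plus_id_inv A h \<in> dom (op_mult A A)" "sq_plus_id A (sq_plus_id_inv A h) = h"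
proof -
  have "sq_plus_id_inv A h \<in> dom (op_mult A A) \<and> sq_plus_id A (sq_plus_id_inv A h) = h"
    unfolding sq_plus_id_inv_def by (rule someI_ex) (use sq_plus_id_surj in blast)
  then show "sq_plus_id_inv A h \<in> dom (op_mult A A)" "sq_plus_id A (sq_plus_id_inv A h) = h"
    by auto
qed

lemma sq_plus_id_inv_eq:
  assumes x: "x \<in> dom (op_mult A A)" and "sq_plus_id A x = h"
  shows "sq_plus_id_inv A h = x"
proof -
  have "sq_plus_id A (sq_plus_id_inv A h - x) = 0"
    using sq_plus_id_diff[OF sq_plus_id_inv(1) x] sq_plus_id_inv(2) assms(2) by simp
  then show ?thesis using sq_plus_id_eq_0_imp_eq_0[OF dom_sq_diff[OF sq_plus_id_inv(1) x]] by simp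
qed

lemma sq_plus_id_inv_sq_plus_id: "x \<in> dom (op_mult A A) \<Longrightarrow> sq_plus_id_inv A (sq_plus_id A x) = x"
  using sq_plus_id_inv_eq by blast

lemma sq_plus_id_inv_add: "sq_plus_id_inv A (a + b) = sq_plus_id_inv A a + sq_plus_id_inv A b"
  by (rule sq_plus_id_inv_eq) (simp_all add: dom_sq_add sq_plus_id_inv sq_plus_id_add)

lemma sq_plus_id_inv_scaleC: "sq_plus_id_inv A (scaleC c a) = scaleC c (sq_plus_id_inv A a)"
  by (rule sq_plus_id_inv_eq) (simp_all add: dom_sq_scaleC sq_plus_id_inv sq_plus_id_scaleC)

lemma sq_plus_id_inv_symmetric: "cinner (sq_plus_id_inv A a) b = cinner a (sq_plus_id_inv A b)"
  using sq_plus_id_symmetric[OF sq_plus_id_inv(1) sq_plus_id_inv(1), of a b]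
  by (simp add: sq_plus_id_inv(2))

lemma cinner_sq_plus_id_inv_self:
  "cinner (sq_plus_id_inv A a) a
    = of_real ((norm (the (A (sq_plus_id_inv A a))))\<^sup>2 + (norm (sq_plus_id_inv A a))\<^sup>2)"
  using cinner_sq_plus_id_self[OF sq_plus_id_inv(1), of a] sq_plus_id_inv_symmetric[of a a]
  by (metis cinner_commute complex_cnj_complex_of_real sq_plus_id_inv(2))

lemma norm_sq_plus_id_inv_le: "norm (sq_plus_id_inv A h) \<le> norm h"
proof -
  let ?x = "sq_plus_id_inv A h"
  have "(norm ?x)\<^sup>2 \<le> Re (cinner ?x h)"
    by (simp add: cinner_sq_plus_id_inv_self)
  also have "\<dots> \<le> norm ?x * norm h"
    using complex_Re_le_cmod cinner_Cauchy_Schwarz order_trans by blast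
  finally show ?thesis
    by (cases "norm ?x = 0") (auto simp: power2_eq_square mult_le_cancel_left)
qed

lemma dense_dom_sq: "closure (dom (op_mult A A)) = UNIV"
proof (rule csubspace_dense)
  show "csubspace (dom (op_mult A A))"
    by (intro csubspaceI dom_sq_0 dom_sq_add dom_sq_scaleC)
  fix w assume "\<And>y. y \<in> dom (op_mult A A) \<Longrightarrow> cinner y w = 0"
  then have "cinner (sq_plus_id_inv A w) w = 0" using sq_plus_id_inv(1) by blast
  then have "(norm (the (A (sq_plus_id_inv A w))))\<^sup>2 + (norm (sq_plus_id_inv A w))\<^sup>2 = 0"
    unfolding cinner_sq_plus_id_inv_self by (simp only: of_real_eq_0_iff)
  then have "sq_plus_id_inv A w = 0" by (simp add: add_nonneg_eq_0_iff)
  then show "w = 0" using sq_plus_id_inv(2)[of w] sq_plus_id_0 by simp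
qed

end

section \<open>Equal domains of squares give equal domains\<close>

lemma log_convex_le_geometric:
  fixes b :: "nat \<Rightarrow> real"
  assumes nonneg: "\<And>n. b n \<ge> 0" and log_convex: "\<And>n. (b (Suc n))\<^sup>2 \<le> b n * b (Suc (Suc n))"
    and bounded: "\<And>n. b n \<le> M * c ^ n" and "c > 0"
  shows "b 1 \<le> c * b 0"
proof (rule ccontr)
  assume "\<not> b 1 \<le> c * b 0"
  then have gt: "b 1 > c * b 0" by simp
  have "b 0 > 0"
  proof (rule ccontr)
    assume "\<not> b 0 > 0"
    then have "b 0 = 0" using nonneg[of 0] by simp
    then have "b 1 = 0" using log_convex[of 0] by simp
    then show False using gt \<open>b 0 = 0\<close> by simp
  qed
  define r where "r = b 1 / b 0"
  have "r > c" unfolding r_def using gt \<open>b 0 > 0\<close> by (simp add: field_simps)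
  have ratio: "b n > 0 \<and> r * b n \<le> b (Suc n)" for n
  proof (induction n)
    case 0
    then show ?case using \<open>b 0 > 0\<close> unfolding r_def by simp
  next
    case (Suc n)
    then have pos: "b (Suc n) > 0" using \<open>r > c\<close> \<open>c > 0\<close> by (smt (verit) mult_pos_pos)
    have "b (Suc n) * (r * b n) \<le> (b (Suc n))\<^sup>2"
      using Suc pos by (simp add: power2_eq_square mult_left_mono)
    also have "\<dots> \<le> b n * b (Suc (Suc n))" by (rule log_convex)
    finally have "b n * (r * b (Suc n)) \<le> b n * b (Suc (Suc n))" by (simp add: mult_ac)
    then show ?case using Suc pos by (simp add: mult_le_cancel_left)
  qed
  have lower: "r ^ n * b 0 \<le> b n" for n
  proof (induction n)
    case (Suc n)
    have "r ^ Suc n * b 0 = r * (r ^ n * b 0)" by simp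
    also have "\<dots> \<le> r * b n" using Suc \<open>r > c\<close> \<open>c > 0\<close> by (intro mult_left_mono) auto
    also have "\<dots> \<le> b (Suc n)" using ratio[of n] by simp
    finally show ?case .
  qed simp
  have "1 < r / c" using \<open>r > c\<close> \<open>c > 0\<close> by simp
  then obtain n where n: "M / b 0 < (r / c) ^ n" using real_arch_pow by blast
  have "r ^ n * b 0 \<le> M * c ^ n" using lower[of n] bounded[of n] by linarith
  then have "(r / c) ^ n * b 0 \<le> M" using \<open>c > 0\<close> by (simp add: power_divide field_simps)
  then show False using n \<open>b 0 > 0\<close> by (simp add: field_simps)
qed

(* A Heinz-type inequality: the sequence q(K^n u, K^n u) is log-convex and grows at most like
   C^(2n), so its first ratio is at most C^2. *)

lemma symmetric_bounded_form_bound: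
  fixes q :: "'a::real_normed_vector \<Rightarrow> 'a \<Rightarrow> complex" and K :: "'a \<Rightarrow> 'a"
  assumes Cauchy_Schwarz: "\<And>a b. (cmod (q a b))\<^sup>2 \<le> Re (q a a) * Re (q b b)"
    and nonneg: "\<And>a. 0 \<le> Re (q a a)"
    and dominated: "\<And>a. Re (q a a) \<le> (norm a)\<^sup>2"
    and symmetric: "\<And>a b. q (K a) b = q a (K b)"
    and bounded: "\<And>a. norm (K a) \<le> C * norm a" and "C > 0"
  shows "cmod (q u (K u)) \<le> C * Re (q u u)"
proof -
  define b where "b n = Re (q ((K ^^ n) u) ((K ^^ n) u))" for n
  have b_nonneg: "b n \<ge> 0" for n unfolding b_def by (rule nonneg)
  have norm_iter: "norm ((K ^^ n) u) \<le> C ^ n * norm u" for n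
  proof (induction n)
    case (Suc n)
    have "norm ((K ^^ Suc n) u) \<le> C * norm ((K ^^ n) u)" using bounded by simp
    also have "\<dots> \<le> C * (C ^ n * norm u)" using Suc \<open>C > 0\<close> by (intro mult_left_mono) auto
    finally show ?case by simp
  qed simp
  have b_bounded: "b n \<le> (norm u)\<^sup>2 * (C\<^sup>2) ^ n" for n
  proof -
    have "b n \<le> (norm ((K ^^ n) u))\<^sup>2" unfolding b_def by (rule dominated)
    also have "\<dots> \<le> (C ^ n * norm u)\<^sup>2"
      using norm_iter[of n] by (intro power_mono) auto
    finally show ?thesis by (simp add: power_mult_distrib power_mult[symmetric] mult_ac)
  qed
  have b_log_convex: "(b (Suc n))\<^sup>2 \<le> b n * b (Suc (Suc n))" for n
  proof -
    define v where "v = (K ^^ n) u"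
    have "b (Suc n) = Re (q v ((K ^^ Suc (Suc n)) u))" unfolding b_def v_def by (simp add: symmetric)
    then have "b (Suc n) \<le> cmod (q v ((K ^^ Suc (Suc n)) u))" using complex_Re_le_cmod by simp
    then have "(b (Suc n))\<^sup>2 \<le> (cmod (q v ((K ^^ Suc (Suc n)) u)))\<^sup>2"
      using b_nonneg[of "Suc n"] by (rule power_mono)
    also have "\<dots> \<le> b n * b (Suc (Suc n))" unfolding b_def v_def by (rule Cauchy_Schwarz)
    finally show ?thesis .
  qed
  have "b 1 \<le> C\<^sup>2 * b 0"
    by (rule log_convex_le_geometric[OF b_nonneg b_log_convex b_bounded]) (use \<open>C > 0\<close> in simp)
  have "(cmod (q u (K u)))\<^sup>2 \<le> b 0 * b 1"
    using Cauchy_Schwarz[of u "K u"] by (simp add: b_def)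
  also have "\<dots> \<le> b 0 * (C\<^sup>2 * b 0)"
    using \<open>b 1 \<le> C\<^sup>2 * b 0\<close> b_nonneg[of 0] by (rule mult_left_mono)
  also have "\<dots> = (C * b 0)\<^sup>2" by (simp add: power2_eq_square)
  finally have "cmod (q u (K u)) \<le> C * b 0"
    by (rule power2_le_imp_le) (use \<open>C > 0\<close> b_nonneg[of 0] in simp)
  then show ?thesis by (simp add: b_def)
qed

context
  fixes A B :: "('a::chilbert_space) op"
  assumes sA: "self_adjoint A" and sB: "self_adjoint B"
    and dom_sq_eq: "dom (op_mult A A) = dom (op_mult B B)"
begin

(* The closed graph theorem for (A^2 + 1)^-1 (B^2 + 1), via uniform boundedness: the symmetry of
   both factors makes the weak bounds automatic. *)

lemma sq_plus_id_inv_sq_plus_id_bounded: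
  "\<exists>K>0. \<forall>y\<in>dom (op_mult A A). norm (sq_plus_id_inv A (sq_plus_id B y)) \<le> K * norm y"
proof -
  define g where "g y = scaleC (of_real (1 / norm y)) (sq_plus_id_inv A (sq_plus_id B y))" for y
  have "\<exists>K. \<forall>y\<in>dom (op_mult A A) - {0}. norm (g y) \<le> K"
  proof (rule uniform_boundedness)
    fix x
    have "cmod (cinner x (g y)) \<le> norm (sq_plus_id B (sq_plus_id_inv A x))"
      if y: "y \<in> dom (op_mult A A) - {0}" for y
    proof -
      have yB: "y \<in> dom (op_mult B B)" and "y \<noteq> 0" using y dom_sq_eq by auto
      have RxB: "sq_plus_id_inv A x \<in> dom (op_mult B B)"
        using sq_plus_id_inv(1)[OF sA] dom_sq_eq by simp
      have "cinner x (sq_plus_id_inv A (sq_plus_id B y))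
          = cinner (sq_plus_id B (sq_plus_id_inv A x)) y"
        by (simp add: sq_plus_id_inv_symmetric[OF sA] sq_plus_id_symmetric[OF sB RxB yB])
      then have "cmod (cinner x (sq_plus_id_inv A (sq_plus_id B y)))
          \<le> norm (sq_plus_id B (sq_plus_id_inv A x)) * norm y"
        by (simp add: cinner_Cauchy_Schwarz)
      moreover have "cmod (cinner x (g y)) = cmod (cinner x (sq_plus_id_inv A (sq_plus_id B y))) / norm y"
        by (simp add: g_def cinner_scaleC_right norm_divide)
      ultimately show ?thesis using \<open>y \<noteq> 0\<close> by (simp add: pos_divide_le_eq)
    qed
    then show "\<exists>K. \<forall>y\<in>dom (op_mult A A) - {0}. cmod (cinner x (g y)) \<le> K" by blast
  qed
  then obtain K where K: "\<And>y. y \<in> dom (op_mult A A) - {0} \<Longrightarrow> norm (g y) \<le> K" by blast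
  have "norm (sq_plus_id_inv A (sq_plus_id B y)) \<le> (\<bar>K\<bar> + 1) * norm y"
    if y: "y \<in> dom (op_mult A A)" for y
  proof (cases "y = 0")
    case True
    then show ?thesis
      using sq_plus_id_inv_eq[OF sA dom_sq_0[OF sA] sq_plus_id_0[OF sA]] sq_plus_id_0[OF sB] by simp
  next
    case False
    then have "norm (sq_plus_id_inv A (sq_plus_id B y)) / norm y \<le> K"
      using K[of y] y by (simp add: g_def norm_scaleC norm_divide)
    then show ?thesis using False by (simp add: field_simps) (smt (verit) mult_right_mono norm_ge_zero)
  qed
  then show ?thesis by (intro exI[of _ "\<bar>K\<bar> + 1"]) auto
qed

lemma sq_plus_id_bounded:
  "\<exists>K>0. \<forall>x\<in>dom (op_mult A A). norm (sq_plus_id B x) \<le> K * norm (sq_plus_id A x)"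
proof -
  obtain K where "K > 0"
    and K: "\<And>y. y \<in> dom (op_mult A A) \<Longrightarrow> norm (sq_plus_id_inv A (sq_plus_id B y)) \<le> K * norm y"
    using sq_plus_id_inv_sq_plus_id_bounded by blast
  have "norm (sq_plus_id B x) \<le> K * norm (sq_plus_id A x)" if x: "x \<in> dom (op_mult A A)" for x
  proof (rule norm_le_if_dense_bound[OF dense_dom_sq[OF sA]])
    show "0 \<le> K * norm (sq_plus_id A x)" using \<open>K > 0\<close> by simp
    fix y assume y: "y \<in> dom (op_mult A A)"
    let ?z = "sq_plus_id_inv A (sq_plus_id B y)"
    have "cinner (sq_plus_id B x) y = cinner x (sq_plus_id A ?z)"
      using x y dom_sq_eq by (simp add: sq_plus_id_symmetric[OF sB] sq_plus_id_inv(2)[OF sA])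
    also have "\<dots> = cinner (sq_plus_id A x) ?z"
      by (rule sq_plus_id_symmetric[OF sA x sq_plus_id_inv(1)[OF sA], symmetric])
    finally have "cmod (cinner (sq_plus_id B x) y) \<le> norm (sq_plus_id A x) * norm ?z"
      by (simp add: cinner_Cauchy_Schwarz)
    also have "\<dots> \<le> norm (sq_plus_id A x) * (K * norm y)" by (intro mult_left_mono K y) simp
    finally show "cmod (cinner (sq_plus_id B x) y) \<le> K * norm (sq_plus_id A x) * norm y"
      by (simp add: mult_ac)
  qed
  then show ?thesis using \<open>K > 0\<close> by blast
qed

lemma graph_norm_bound:
  "\<exists>C>0. \<forall>x\<in>dom (op_mult A A).
    (norm (the (B x)))\<^sup>2 + (norm x)\<^sup>2 \<le> C * ((norm (the (A x)))\<^sup>2 + (norm x)\<^sup>2)"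
proof -
  obtain C where "C > 0"
    and C: "\<And>x. x \<in> dom (op_mult A A) \<Longrightarrow> norm (sq_plus_id B x) \<le> C * norm (sq_plus_id A x)"
    using sq_plus_id_bounded by blast
  let ?R = "sq_plus_id_inv A"
  define q where "q a b = cinner (?R a) b" for a b
  define K where "K a = sq_plus_id B (?R a)" for a
  have RB: "?R a \<in> dom (op_mult B B)" for a using sq_plus_id_inv(1)[OF sA] dom_sq_eq by simp
  have q_self: "q a a = of_real ((norm (the (A (?R a))))\<^sup>2 + (norm (?R a))\<^sup>2)" for a
    unfolding q_def by (rule cinner_sq_plus_id_inv_self[OF sA])
  have nonneg: "0 \<le> Re (q a a)" for a by (simp add: q_self)
  have Cauchy_Schwarz: "(cmod (q a b))\<^sup>2 \<le> Re (q a a) * Re (q b b)" for a b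
  proof (rule hermitian_form_Cauchy_Schwarz[where S = UNIV and q = q])
    show "q y x = cnj (q x y)" for x y
      unfolding q_def by (metis sq_plus_id_inv_symmetric[OF sA] cinner_commute)
  qed (simp_all add: q_def nonneg[unfolded q_def] sq_plus_id_inv_add[OF sA] sq_plus_id_inv_scaleC[OF sA]
      cinner_add_left cinner_scaleC_left)
  have dominated: "Re (q a a) \<le> (norm a)\<^sup>2" for a
  proof -
    have "Re (q a a) \<le> norm (?R a) * norm a"
      unfolding q_def using complex_Re_le_cmod cinner_Cauchy_Schwarz order_trans by blast
    also have "\<dots> \<le> norm a * norm a"
      by (intro mult_right_mono norm_sq_plus_id_inv_le[OF sA]) simp
    finally show ?thesis by (simp add: power2_eq_square)
  qed
  have symmetric: "q (K a) b = q a (K b)" for a b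
    unfolding q_def K_def
    by (simp add: sq_plus_id_inv_symmetric[OF sA] sq_plus_id_symmetric[OF sB RB RB])
  have bounded: "norm (K a) \<le> C * norm a" for a
    using C[OF sq_plus_id_inv(1)[OF sA]] by (simp add: K_def sq_plus_id_inv(2)[OF sA])
  have bound: "cmod (q u (K u)) \<le> C * Re (q u u)" for u
    using Cauchy_Schwarz nonneg dominated symmetric bounded \<open>C > 0\<close>
    by (rule symmetric_bounded_form_bound[where q = q and K = K])
  have "(norm (the (B x)))\<^sup>2 + (norm x)\<^sup>2 \<le> C * ((norm (the (A x)))\<^sup>2 + (norm x)\<^sup>2)"
    if x: "x \<in> dom (op_mult A A)" for x
  proof -
    have R: "?R (sq_plus_id A x) = x" by (rule sq_plus_id_inv_sq_plus_id[OF sA x])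
    have xB: "x \<in> dom (op_mult B B)" using x dom_sq_eq by simp
    have "q (sq_plus_id A x) (K (sq_plus_id A x)) = cnj (cinner (sq_plus_id B x) x)"
      by (simp add: q_def K_def R flip: cinner_commute)
    also have "\<dots> = of_real ((norm (the (B x)))\<^sup>2 + (norm x)\<^sup>2)"
      by (simp only: cinner_sq_plus_id_self[OF sB xB] complex_cnj_complex_of_real)
    finally have "cmod (q (sq_plus_id A x) (K (sq_plus_id A x))) = (norm (the (B x)))\<^sup>2 + (norm x)\<^sup>2"
      by (simp only: norm_of_real) simp
    moreover have "Re (q (sq_plus_id A x) (sq_plus_id A x)) = (norm (the (A x)))\<^sup>2 + (norm x)\<^sup>2"
      by (simp add: q_self R)
    ultimately show ?thesis using bound[of "sq_plus_id A x"] by simp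
  qed
  then show ?thesis using \<open>C > 0\<close> by blast
qed

end

lemma self_adjoint_dom_sq_core:
  fixes A :: "('a::chilbert_space) op"
  assumes sa: "self_adjoint A" and x: "x \<in> dom A"
  obtains xs where "\<And>n. xs n \<in> dom (op_mult A A)" "xs \<longlonglongrightarrow> x"
    "(\<lambda>n. the (A (xs n))) \<longlonglongrightarrow> the (A x)"
proof -
  define g where "g = the (A x) + scaleC \<i> x"
  have "g \<in> closure (dom A)" using self_adjoint_dense[OF sa] by simp
  then obtain gs where gs: "\<And>n. gs n \<in> dom A" "gs \<longlonglongrightarrow> g" by (meson closure_sequential)
  have "\<forall>n. \<exists>y. y \<in> dom A \<and> the (A y) + scaleC \<i> y = gs n"
    using self_adjoint_shift_surj[OF sa, of 1] by (simp add: Bex_def)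
  from choice[OF this] obtain xs where "\<forall>n. xs n \<in> dom A \<and> the (A (xs n)) + scaleC \<i> (xs n) = gs n"
    by blast
  then have xs: "\<And>n. xs n \<in> dom A" and xs_gs: "\<And>n. the (A (xs n)) + scaleC \<i> (xs n) = gs n"
    by simp_all
  have xs_sq: "xs n \<in> dom (op_mult A A)" for n
  proof -
    have "the (A (xs n)) = gs n - scaleC \<i> (xs n)" using xs_gs[of n] by (simp add: algebra_simps)
    then show ?thesis
      using xs gs(1) by (simp add: dom_op_mult_self_iff self_adjoint_dom_diff[OF sa]
          self_adjoint_dom_scaleC[OF sa])
  qed
  have graph_dist: "(norm (the (A (xs n)) - the (A x)))\<^sup>2 + (norm (xs n - x))\<^sup>2
      = (norm (gs n - g))\<^sup>2" for n
  proof -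
    have d: "xs n - x \<in> dom A" by (rule self_adjoint_dom_diff[OF sa xs x])
    have Ad: "the (A (xs n - x)) = the (A (xs n)) - the (A x)"
      using self_adjoint_diff[OF sa xs x] by simp
    have "the (A (xs n - x)) + scaleC \<i> (xs n - x) = gs n - g"
      unfolding Ad g_def xs_gs[symmetric] by (simp add: scaleC_diff_right algebra_simps)
    moreover have "(norm (the (A (xs n - x)) + scaleC \<i> (xs n - x)))\<^sup>2
        = (norm (the (A (xs n - x))))\<^sup>2 + (norm (xs n - x))\<^sup>2"
      using self_adjoint_norm_shift_sq[OF sa d, of 1] by simp
    ultimately show ?thesis by (simp add: Ad)
  qed
  have g_lim: "(\<lambda>n. norm (gs n - g)) \<longlonglongrightarrow> 0"
    using tendsto_norm_zero[OF LIM_zero[OF gs(2)]] .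
  have x_lim: "(\<lambda>n. xs n - x) \<longlonglongrightarrow> 0"
  proof (rule Lim_null_comparison[OF always_eventually g_lim], rule allI, rule power2_le_imp_le)
    show "(norm (xs n - x))\<^sup>2 \<le> (norm (gs n - g))\<^sup>2" for n
      using graph_dist[of n] zero_le_power2[of "norm (the (A (xs n)) - the (A x))"] by linarith
  qed simp
  have Ax_lim: "(\<lambda>n. the (A (xs n)) - the (A x)) \<longlonglongrightarrow> 0"
  proof (rule Lim_null_comparison[OF always_eventually g_lim], rule allI, rule power2_le_imp_le)
    show "(norm (the (A (xs n)) - the (A x)))\<^sup>2 \<le> (norm (gs n - g))\<^sup>2" for n
      using graph_dist[of n] zero_le_power2[of "norm (xs n - x)"] by linarith
  qed simp
  show ?thesis
    by (rule that[OF xs_sq LIM_zero_cancel[OF x_lim] LIM_zero_cancel[OF Ax_lim]])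
qed

lemma dom_subset_if_graph_norm_bound:
  fixes A B :: "('a::chilbert_space) op"
  assumes sA: "self_adjoint A" and sB: "self_adjoint B" and sub: "dom (op_mult A A) \<subseteq> dom B"
    and bound: "\<And>x. x \<in> dom (op_mult A A) \<Longrightarrow>
      (norm (the (B x)))\<^sup>2 \<le> C * ((norm (the (A x)))\<^sup>2 + (norm x)\<^sup>2)"
  shows "dom A \<subseteq> dom B"
proof
  fix x assume "x \<in> dom A"
  obtain xs where xs: "\<And>n. xs n \<in> dom (op_mult A A)" and lim: "xs \<longlonglongrightarrow> x"
    and A_lim: "(\<lambda>n. the (A (xs n))) \<longlonglongrightarrow> the (A x)"
    using self_adjoint_dom_sq_core[OF sA \<open>x \<in> dom A\<close>] by blast
  have xsA: "xs n \<in> dom A" for n using xs by (simp add: dom_op_mult_self_iff)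
  have xsB: "xs n \<in> dom B" for n using xs sub by blast
  have "dist (the (B (xs m))) (the (B (xs n)))
      \<le> sqrt \<bar>C\<bar> * dist (xs m, the (A (xs m))) (xs n, the (A (xs n)))" for m n
  proof (rule power2_le_imp_le)
    have "(dist (the (B (xs m))) (the (B (xs n))))\<^sup>2 = (norm (the (B (xs m - xs n))))\<^sup>2"
      using self_adjoint_diff[OF sB xsB xsB] by (simp add: dist_norm)
    also have "\<dots> \<le> C * ((norm (the (A (xs m - xs n))))\<^sup>2 + (norm (xs m - xs n))\<^sup>2)"
      by (rule bound[OF dom_sq_diff[OF sA xs xs]])
    also have "\<dots> \<le> \<bar>C\<bar> * ((norm (the (A (xs m - xs n))))\<^sup>2 + (norm (xs m - xs n))\<^sup>2)"
      by (intro mult_right_mono) auto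
    also have "\<dots> = (sqrt \<bar>C\<bar> * dist (xs m, the (A (xs m))) (xs n, the (A (xs n))))\<^sup>2"
      using self_adjoint_diff[OF sA xsA xsA]
      by (simp add: norm_Pair power_mult_distrib dist_norm add.commute)
    finally show "(dist (the (B (xs m))) (the (B (xs n))))\<^sup>2
      \<le> (sqrt \<bar>C\<bar> * dist (xs m, the (A (xs m))) (xs n, the (A (xs n))))\<^sup>2" .
  qed simp
  moreover have "Cauchy (\<lambda>n. (xs n, the (A (xs n))))"
    by (rule LIMSEQ_imp_Cauchy[OF tendsto_Pair[OF lim A_lim]])
  ultimately have "Cauchy (\<lambda>n. the (B (xs n)))" by (rule Cauchy_if_dist_le_mult[rotated])
  then obtain b where "(\<lambda>n. the (B (xs n))) \<longlonglongrightarrow> b" using Cauchy_convergent convergent_def by blast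
  then have "B x = Some b" by (rule self_adjoint_closed_graph[OF sB xsB lim])
  then show "x \<in> dom B" by blast
qed

lemma self_adjoint_dom_eq_if_dom_sq_eq:
  fixes A B :: "('a::chilbert_space) op"
  assumes sA: "self_adjoint A" and sB: "self_adjoint B"
    and dom_sq_eq: "dom (op_mult A A) = dom (op_mult B B)"
  shows "dom A = dom B"
proof -
  have "dom A \<subseteq> dom B"
    if sA: "self_adjoint A" and sB: "self_adjoint B"
      and dom_sq_eq: "dom (op_mult A A) = dom (op_mult B B)" for A B :: "'a op"
  proof -
    obtain C where C: "\<And>x. x \<in> dom (op_mult A A) \<Longrightarrow>
        (norm (the (B x)))\<^sup>2 + (norm x)\<^sup>2 \<le> C * ((norm (the (A x)))\<^sup>2 + (norm x)\<^sup>2)"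
      using graph_norm_bound[OF sA sB dom_sq_eq] by blast
    show ?thesis
    proof (rule dom_subset_if_graph_norm_bound[OF sA sB, where C = C])
      show "dom (op_mult A A) \<subseteq> dom B"
        unfolding dom_sq_eq using dom_op_mult_self_iff[of _ B] by blast
      show "(norm (the (B x)))\<^sup>2 \<le> C * ((norm (the (A x)))\<^sup>2 + (norm x)\<^sup>2)"
        if "x \<in> dom (op_mult A A)" for x
        using C[OF that] zero_le_power2[of "norm x"] by linarith
    qed
  qed
  then show ?thesis using sA sB dom_sq_eq by (metis subset_antisym)
qed

section \<open>Square-zero combinations A + iB\<close>

lemma op_plus_op_scale_apply:
  "x \<in> dom A \<Longrightarrow> x \<in> dom B \<Longrightarrow>
    op_plus A (op_scale c B) x = Some (the (A x) + scaleC c (the (B x)))"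
  unfolding op_plus_def op_scale_def by auto

lemma self_adjoint_eq_0_if_vanishes_on_dom_sq:
  fixes A :: "('a::chilbert_space) op"
  assumes sa: "self_adjoint A" and vanish: "\<And>x. x \<in> dom (op_mult A A) \<Longrightarrow> the (A x) = 0"
  shows "A y = Some 0"
proof -
  have "the (A w) = 0" if w: "w \<in> dom A" for w
  proof -
    define u where "u = sq_plus_id_inv A (the (A w))"
    have u: "u \<in> dom (op_mult A A)" "sq_plus_id A u = the (A w)"
      unfolding u_def by (simp_all add: sq_plus_id_inv[OF sa])
    have "cinner (sq_plus_id A u) u = cinner w (the (A u))"
      unfolding u(2) using w u(1) by (simp add: dom_op_mult_self_iff self_adjoint_symmetric[OF sa])
    also have "\<dots> = 0" using vanish[OF u(1)] by simp
    finally have "of_real ((norm (the (A u)))\<^sup>2 + (norm u)\<^sup>2) = (0::complex)"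
      by (simp only: cinner_sq_plus_id_self[OF sa u(1)])
    then have "u = 0" by (simp only: of_real_eq_0_iff) (simp add: add_nonneg_eq_0_iff)
    then show ?thesis using u(2) sq_plus_id_0[OF sa] by simp
  qed
  then show ?thesis unfolding self_adjoint_eq_Some_iff[OF sa] by simp
qed

lemma self_adjoint_add_i_eq_0_imp_eq_0:
  fixes A B :: "('a::complex_inner) op"
  assumes sA: "self_adjoint A" and sB: "self_adjoint B" and pos: "positive_op A \<or> positive_op B"
    and y: "y \<in> dom A" "y \<in> dom B" and eq_0: "the (A y) + scaleC \<i> (the (B y)) = 0"
  shows "the (A y) = 0 \<and> the (B y) = 0"
proof -
  have "the (A y) = - scaleC \<i> (the (B y))" using eq_0 by (simp add: eq_neg_iff_add_eq_0)
  then have "cinner (the (A y)) y = \<i> * cinner (the (B y)) y"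
    by (simp add: cinner_minus_left cinner_scaleC_left)
  then have "Re (cinner (the (A y)) y) = 0" "Re (cinner (the (B y)) y) = 0"
    using self_adjoint_cinner_self_real[OF sA y(1)] self_adjoint_cinner_self_real[OF sB y(2)]
    by (simp_all add: complex_eq_iff)
  then have "the (A y) = 0 \<or> the (B y) = 0"
    using pos y positive_op_form_eq_0_imp_eq_0 by blast
  then show ?thesis using eq_0 by (auto simp: scaleC_eq_0_iff)
qed

lemma square_subset_0_vanishes_on_dom_sq:
  fixes A B :: "('a::complex_inner) op"
  defines "T \<equiv> op_plus A (op_scale \<i> B)"
  assumes sA: "self_adjoint A" and sB: "self_adjoint B" and pos: "positive_op A \<or> positive_op B"
    and dom_eq: "dom A = dom B" and T_sq: "\<forall>x\<in>dom (op_mult T T). op_mult T T x = Some 0"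
    and xA: "x \<in> dom (op_mult A A)" and xB: "x \<in> dom (op_mult B B)"
  shows "the (A x) = 0 \<and> the (B x) = 0"
proof -
  have x: "x \<in> dom A" "x \<in> dom B" and Ax: "the (A x) \<in> dom A" and Bx: "the (B x) \<in> dom B"
    using xA xB by (simp_all add: dom_op_mult_self_iff)
  define y where "y = the (A x) + scaleC \<i> (the (B x))"
  have y: "y \<in> dom A" "y \<in> dom B"
    using Ax Bx dom_eq by (simp_all add: y_def self_adjoint_dom_add[OF sB] self_adjoint_dom_scaleC[OF sB])
  have "op_mult T T x = T y"
    by (simp add: op_mult_def T_def y_def op_plus_op_scale_apply[OF x])
  also have "\<dots> = Some (the (A y) + scaleC \<i> (the (B y)))"
    unfolding T_def by (rule op_plus_op_scale_apply[OF y])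
  finally have "the (A y) + scaleC \<i> (the (B y)) = 0"
    using T_sq by (metis domI option.inject)
  then have Ay_By: "the (A y) = 0 \<and> the (B y) = 0"
    by (rule self_adjoint_add_i_eq_0_imp_eq_0[OF sA sB pos y])
  have "cinner y y = cinner (the (A x)) y + cnj \<i> * cinner (the (B x)) y"
    unfolding y_def by (simp add: cinner_add_left cinner_scaleC_left)
  also have "cinner (the (A x)) y = cinner x (the (A y))" by (rule self_adjoint_symmetric[OF sA x(1) y(1)])
  also have "cinner (the (B x)) y = cinner x (the (B y))" by (rule self_adjoint_symmetric[OF sB x(2) y(2)])
  finally have "y = 0" using Ay_By by (simp add: cinner_eq_zero_iff)
  then show ?thesis using self_adjoint_add_i_eq_0_imp_eq_0[OF sA sB pos x] by (simp add: y_def)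
qed

theorem theorem2p10:
  fixes A B :: "('a::chilbert_space) op"
  assumes "self_adjoint A" and "self_adjoint B"
    and "positive_op A \<or> positive_op B"
    and "dom (op_mult A A) = dom (op_mult B B)"
    and "\<forall>x\<in>dom (op_mult (op_plus A (op_scale \<i> B)) (op_plus A (op_scale \<i> B))).
           op_mult (op_plus A (op_scale \<i> B)) (op_plus A (op_scale \<i> B)) x = Some 0"
  shows "dom (op_plus A (op_scale \<i> B)) = UNIV \<and> (\<forall>x. op_plus A (op_scale \<i> B) x = Some 0)"
proof -
  have dom_eq: "dom A = dom B"
    using assms(1,2,4) by (rule self_adjoint_dom_eq_if_dom_sq_eq)
  have vanish: "the (A x) = 0 \<and> the (B x) = 0" if "x \<in> dom (op_mult A A)" for x
    using square_subset_0_vanishes_on_dom_sq[OF assms(1-3) dom_eq assms(5) that] that assms(4)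
    by simp
  have "A x = Some 0" for x
    using assms(1) by (rule self_adjoint_eq_0_if_vanishes_on_dom_sq) (use vanish in blast)
  moreover have "B x = Some 0" for x
    using assms(2) by (rule self_adjoint_eq_0_if_vanishes_on_dom_sq) (use vanish assms(4) in blast)
  ultimately have "op_plus A (op_scale \<i> B) x = Some 0" for x
    by (simp add: op_plus_op_scale_apply domI)
  then show ?thesis by auto
qed

end
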